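(* Let $K\subset L\subset\mathbb{R}^2$ be convex compact sets with $\operatorname{vol}L>0$. Then for every unit vector $\bm u\in\mathbb{R}^2$, $$\frac{\operatorname{vol}P_{\bm u}K}{\operatorname{vol}P_{\bm u}L}\ \ge\ 1-\sqrt{1-\frac{\operatorname{vol}K}{\operatorname{vol}L}}.$$ The bound is tight: for every value $r\in[0,1]$ there exist such $K\subset L$ with $\operatorname{vol}K/\operatorname{vol}L=r$ and a direction $\bm u$ attaining equality.
   Context: $P_{\bm u}$ is the orthogonal projection onto the line orthogonal to $\bm u$; $\operatorname{vol}$ denotes area for subsets of $\mathbb{R}^2$ and length for subsets of a line. *)

theory Defs
  imports "HOL-Analysis.Analysis"
begin

definition proj_perp :: "real^2 \<Rightarrow> real^2 \<Rightarrow> real^2" where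
  "proj_perp u x = x - (x \<bullet> u) *\<^sub>R u"

definition perp_dir :: "real^2 \<Rightarrow> real^2" where
  "perp_dir u = vector [- (u$2), u$1]"

text \<open>Length (1-dimensional volume) of a subset S of the line orthogonal to the unit
  vector u: Lebesgue measure of its preimage under the isometric parametrisation
  t \<mapsto> t * perp_dir u of that line.\<close>
definition line_vol :: "real^2 \<Rightarrow> (real^2) set \<Rightarrow> real" where
  "line_vol u S = measure lebesgue {t::real. t *\<^sub>R perp_dir u \<in> S}"

end

theory Submission
  imports Defs
begin

text \<open>Project K \<subseteq> L onto the line spanned by w = perp_dir u: K projects onto [a, b] inside
  the projection [\<alpha>, \<beta>] of L, and the gaps add up to \<lambda>(\<beta> - \<alpha>) with
  \<lambda> = 1 - (b - a)/(\<beta> - \<alpha>). Cut L by a suitable level line x \<bullet> w = t and shrink the lower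
  piece by \<lambda> towards a point of L where x \<bullet> w = \<alpha>, the upper piece by \<lambda> towards a point
  where x \<bullet> w = \<beta>. By convexity both homothets lie in L, one below the level a and one above b,
  so they meet K and each other only in null sets. Hence
  vol K + \<lambda>^2 (vol L1 + vol L2) \<le> vol L with vol L1 + vol L2 \<ge> vol L, i.e.
  \<lambda>^2 \<le> 1 - vol K / vol L. In dimension n the same argument gives \<lambda>^n.
  Equality holds for the right triangle L with vertices 0, (1,0), (1,1) and K the part of L with
  x1 \<ge> s, projected onto the first axis: L \<setminus> K is L scaled by s.\<close>

definition width :: "'a::real_inner \<Rightarrow> 'a set \<Rightarrow> real" where
  "width w S = measure lebesgue ((\<lambda>x. x \<bullet> w) ` S)"

lemma inner_image_eq_interval:
  fixes S :: "'a::euclidean_space set"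
  assumes "compact S" "convex S" "S \<noteq> {}"
  obtains p q where "p \<in> S" "q \<in> S" "(\<lambda>x. x \<bullet> w) ` S = {p \<bullet> w .. q \<bullet> w}"
proof -
  have "compact ((\<lambda>x. x \<bullet> w) ` S)"
    using assms(1) by (intro compact_continuous_image continuous_intros)
  moreover have "convex ((\<lambda>x. x \<bullet> w) ` S)"
    using assms(2) by (rule convex_linear_image[OF bounded_linear.linear[OF bounded_linear_inner_left]])
  ultimately obtain a b where ab: "(\<lambda>x. x \<bullet> w) ` S = {a..b}"
    by (meson connected_compact_interval_1 convex_connected)
  then have "a \<in> (\<lambda>x. x \<bullet> w) ` S" "b \<in> (\<lambda>x. x \<bullet> w) ` S"
    using assms(3) by (metis atLeastatMost_empty_iff atLeastAtMost_iff image_is_empty order_refl)+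
  then obtain p q where "p \<in> S" "q \<in> S" "a = p \<bullet> w" "b = q \<bullet> w"
    by auto
  with ab show thesis using that by blast
qed

lemma homothetic_image_halfspace_subset:
  fixes L :: "'a::real_inner set"
  assumes "convex L" "p \<in> L" "0 \<le> c" "c \<le> 1" "c * t + (1 - c) * (p \<bullet> w) = s"
  shows "(\<lambda>x. c *\<^sub>R x + (1 - c) *\<^sub>R p) ` (L \<inter> {x. x \<bullet> w \<le> t})
           \<subseteq> L \<inter> {x. x \<bullet> w \<le> s}"
proof safe
  fix x assume "x \<in> L" "x \<bullet> w \<le> t"
  then show "c *\<^sub>R x + (1 - c) *\<^sub>R p \<in> L" using assms by (intro convexD) auto
  show "(c *\<^sub>R x + (1 - c) *\<^sub>R p) \<bullet> w \<le> s"
  proof -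
    have "c * (x \<bullet> w) \<le> c * t"
      using \<open>x \<bullet> w \<le> t\<close> assms(3) by (rule mult_left_mono)
    then show ?thesis using assms(5) by (simp add: inner_add_left)
  qed
qed

lemma measure_plus_homothets_le:
  fixes K L :: "'a::euclidean_space set"
  assumes L: "convex L" "compact L" and K: "K \<subseteq> L" "K \<in> lmeasurable"
    and w: "w \<noteq> 0"
    and pq: "p \<in> L" "q \<in> L" "\<And>x. x \<in> L \<Longrightarrow> p \<bullet> w \<le> x \<bullet> w \<and> x \<bullet> w \<le> q \<bullet> w"
      "p \<bullet> w < q \<bullet> w"
    and K_slab: "\<And>x. x \<in> K \<Longrightarrow> a \<le> x \<bullet> w \<and> x \<bullet> w \<le> b" and "a \<le> b"
    and c: "0 \<le> c" "c * (q \<bullet> w - p \<bullet> w) = (a - p \<bullet> w) + (q \<bullet> w - b)"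
  shows "measure lebesgue K + c ^ DIM('a) * measure lebesgue L \<le> measure lebesgue L"
proof (cases "c = 0")
  case True
  have "measure lebesgue K \<le> measure lebesgue L"
    using K L by (intro measure_mono_fmeasurable) (auto intro: lmeasurable_compact)
  with True show ?thesis by (simp add: zero_power)
next
  case False
  with c have c_pos: "0 < c" by simp
  have c_le1: "c \<le> 1"
  proof -
    have "c * (q \<bullet> w - p \<bullet> w) \<le> 1 * (q \<bullet> w - p \<bullet> w)"
      using c(2) \<open>a \<le> b\<close> by simp
    then show ?thesis using pq(4) by (simp add: mult_le_cancel_right)
  qed
  define t where "t = p \<bullet> w + (a - p \<bullet> w) / c"
  have t_low: "c * t + (1 - c) * (p \<bullet> w) = a"
    using c_pos by (simp add: t_def field_simps)
  have t_high: "c * t + (1 - c) * (q \<bullet> w) = b"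
    using t_low c(2) by (simp add: algebra_simps)
  define L1 where "L1 = L \<inter> {x. x \<bullet> w \<le> t}"
  define L2 where "L2 = L \<inter> {x. x \<bullet> - w \<le> - t}"
  define H1 where "H1 = (\<lambda>x. c *\<^sub>R x + (1 - c) *\<^sub>R p) ` L1"
  define H2 where "H2 = (\<lambda>x. c *\<^sub>R x + (1 - c) *\<^sub>R q) ` L2"
  have H1: "H1 \<subseteq> L \<inter> {x. x \<bullet> w \<le> a}"
    using homothetic_image_halfspace_subset[OF L(1) pq(1) c(1) c_le1 t_low]
    by (simp add: H1_def L1_def)
  have H2: "H2 \<subseteq> L \<inter> {x. x \<bullet> - w \<le> - b}"
    using homothetic_image_halfspace_subset[OF L(1) pq(2) c(1) c_le1, of "- t" "- w" "- b"] t_high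
    by (simp add: H2_def L2_def algebra_simps)
  have L12: "compact L1" "compact L2"
    unfolding L1_def L2_def by (intro compact_Int_closed L(2) closed_Collect_le continuous_intros)+
  have H12: "compact H1" "compact H2"
    unfolding H1_def H2_def by (intro compact_continuous_image continuous_intros L12)+
  have "measure lebesgue L \<le> measure lebesgue L1 + measure lebesgue L2"
  proof -
    have "L = L1 \<union> L2" by (auto simp: L1_def L2_def)
    then show ?thesis
      using measure_Un_le[of L1 lebesgue L2] L12 by (metis fmeasurableD lmeasurable_compact)
  qed
  then have "c ^ DIM('a) * measure lebesgue L \<le> c ^ DIM('a) * (measure lebesgue L1 + measure lebesgue L2)"
    using c(1) by (simp add: mult_left_mono)
  also have "\<dots> = measure lebesgue H1 + measure lebesgue H2"
    using c(1) by (simp add: H1_def H2_def measure_lebesgue_affine distrib_left)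
  also have "\<dots> + measure lebesgue K = measure lebesgue (H1 \<union> H2 \<union> K)"
  proof (rule measure_Un3_negligible[symmetric])
    have hyperplane: "negligible {x. w \<bullet> x = d}" for d
      using w by (simp add: negligible_hyperplane)
    have "H1 \<inter> H2 \<subseteq> {x. w \<bullet> x = a}"
      using H1 H2 \<open>a \<le> b\<close> by (fastforce simp: inner_commute)
    then show "negligible (H1 \<inter> H2)" by (rule negligible_subset[OF hyperplane])
    have "H1 \<inter> K \<subseteq> {x. w \<bullet> x = a}"
      using H1 K_slab by (fastforce simp: inner_commute)
    then show "negligible (H1 \<inter> K)" by (rule negligible_subset[OF hyperplane])
    have "H2 \<inter> K \<subseteq> {x. w \<bullet> x = b}"
      using H2 K_slab by (fastforce simp: inner_commute)
    then show "negligible (H2 \<inter> K)" by (rule negligible_subset[OF hyperplane])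
  qed (use H12 K lmeasurable_compact in auto)
  also have "\<dots> \<le> measure lebesgue L"
    using H1 H2 H12 K L by (intro measure_mono_fmeasurable) (auto intro: fmeasurableD lmeasurable_compact)
  finally show ?thesis by simp
qed

lemma width_ratio_power_bound:
  fixes K L :: "'a::euclidean_space set"
  assumes K: "convex K" "compact K" and L: "convex L" "compact L" and "K \<subseteq> L"
    and L_pos: "measure lebesgue L > 0" and w: "w \<noteq> 0"
  shows "(1 - width w K / width w L) ^ DIM('a) \<le> 1 - measure lebesgue K / measure lebesgue L"
proof (cases "K = {}")
  case True
  then show ?thesis by (simp add: width_def)
next
  case False
  obtain p' q' where pq': "p' \<in> K" "q' \<in> K" and K_img: "(\<lambda>x. x \<bullet> w) ` K = {p' \<bullet> w .. q' \<bullet> w}"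
    using inner_image_eq_interval[OF K(2,1) False] .
  obtain p q where pq: "p \<in> L" "q \<in> L" and L_img: "(\<lambda>x. x \<bullet> w) ` L = {p \<bullet> w .. q \<bullet> w}"
    using inner_image_eq_interval[OF L(2,1)] False \<open>K \<subseteq> L\<close> by blast
  have L_slab: "p \<bullet> w \<le> x \<bullet> w \<and> x \<bullet> w \<le> q \<bullet> w" if "x \<in> L" for x
    using L_img that by (metis atLeastAtMost_iff image_eqI)
  have K_slab: "p' \<bullet> w \<le> x \<bullet> w \<and> x \<bullet> w \<le> q' \<bullet> w" if "x \<in> K" for x
    using K_img that by (metis atLeastAtMost_iff image_eqI)
  have "p' \<bullet> w \<le> q' \<bullet> w" using K_slab pq'(1) by blast
  have "p \<bullet> w < q \<bullet> w"
  proof (rule ccontr)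
    assume "\<not> p \<bullet> w < q \<bullet> w"
    then have "L \<subseteq> {x. w \<bullet> x = p \<bullet> w}"
      using L_slab by (force simp: inner_commute)
    then have "negligible L"
      using negligible_subset[OF negligible_hyperplane] w by blast
    with L_pos show False by (simp add: negligible_imp_measure0)
  qed
  define c where "c = 1 - width w K / width w L"
  have widths: "width w K = q' \<bullet> w - p' \<bullet> w" "width w L = q \<bullet> w - p \<bullet> w"
    using K_img L_img \<open>p' \<bullet> w \<le> q' \<bullet> w\<close> \<open>p \<bullet> w < q \<bullet> w\<close> by (simp_all add: width_def)
  have "p \<bullet> w \<le> p' \<bullet> w" "q' \<bullet> w \<le> q \<bullet> w"
    using L_slab pq' \<open>K \<subseteq> L\<close> by auto
  then have "0 \<le> c" "c * (q \<bullet> w - p \<bullet> w) = (p' \<bullet> w - p \<bullet> w) + (q \<bullet> w - q' \<bullet> w)"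
    using \<open>p \<bullet> w < q \<bullet> w\<close> by (simp_all add: c_def widths field_simps)
  then have "measure lebesgue K + c ^ DIM('a) * measure lebesgue L \<le> measure lebesgue L"
    using measure_plus_homothets_le[OF L \<open>K \<subseteq> L\<close> lmeasurable_compact[OF K(2)] w pq L_slab
        \<open>p \<bullet> w < q \<bullet> w\<close> K_slab \<open>p' \<bullet> w \<le> q' \<bullet> w\<close>] by blast
  then show ?thesis
    using L_pos by (simp add: c_def field_simps)
qed

lemma norm_perp_dir: "norm u = 1 \<Longrightarrow> norm (perp_dir u) = 1"
  by (simp add: norm_eq_1 inner_vec_def sum_2 perp_dir_def)

lemma proj_perp_eq:
  assumes "norm u = 1"
  shows "proj_perp u x = (x \<bullet> perp_dir u) *\<^sub>R perp_dir u"
proof -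
  have "u$1 * u$1 + u$2 * u$2 = 1"
    using assms by (simp add: norm_eq_1 inner_vec_def sum_2)
  then have "x$1 = x$1 * (u$1 * u$1) + x$1 * (u$2 * u$2)" "x$2 = x$2 * (u$1 * u$1) + x$2 * (u$2 * u$2)"
    by (metis distrib_left mult_1_right)+
  then show ?thesis
    unfolding proj_perp_def perp_dir_def
    by (simp add: vec_eq_iff forall_2 inner_vec_def sum_2 algebra_simps)
qed

lemma line_vol_proj_perp:
  assumes "norm u = 1"
  shows "line_vol u (proj_perp u ` K) = width (perp_dir u) K"
proof -
  have "perp_dir u \<noteq> 0" using norm_perp_dir[OF assms] by auto
  then have "{t. t *\<^sub>R perp_dir u \<in> proj_perp u ` K} = (\<lambda>x. x \<bullet> perp_dir u) ` K"
    by (auto simp: proj_perp_eq[OF assms] image_iff)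
  then show ?thesis by (simp add: line_vol_def width_def)
qed

definition right_triangle :: "real \<Rightarrow> (real^2) set" where
  "right_triangle s = {x. 0 \<le> x$2 \<and> x$2 \<le> x$1 \<and> x$1 \<le> s}"

lemma right_triangle_eq_halfspaces:
  "right_triangle s = {x. (- axis 2 1) \<bullet> x \<le> 0} \<inter> {x. (axis 2 1 - axis 1 1) \<bullet> x \<le> 0}
                       \<inter> {x. axis 1 1 \<bullet> x \<le> s}"
  by (auto simp: right_triangle_def inner_axis' inner_diff_left)

lemma convex_right_triangle: "convex (right_triangle s)"
  unfolding right_triangle_eq_halfspaces by (intro convex_Int convex_halfspace_le)

lemma compact_right_triangle: "compact (right_triangle s)"
proof -
  have "right_triangle s \<subseteq> cbox 0 (vector [s, s])"
    by (auto simp: right_triangle_def mem_box_cart forall_2)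
  then have "bounded (right_triangle s)"
    using bounded_cbox bounded_subset by blast
  moreover have "closed (right_triangle s)"
    unfolding right_triangle_eq_halfspaces by (intro closed_Int closed_halfspace_le)
  ultimately show ?thesis by (simp add: compact_eq_bounded_closed)
qed

lemma measure_right_triangle_pos: "0 < measure lebesgue (right_triangle 1)"
proof -
  define B :: "(real^2) set" where "B = cbox (vector [1/2, 0]) (vector [1, 1/2])"
  have "B \<noteq> {}"
    by (simp add: B_def interval_ne_empty_cart forall_2)
  then have "measure lebesgue B = 1/4"
    by (simp add: B_def measure_completion content_cbox_cart UNIV_2)
  moreover have "B \<subseteq> right_triangle 1"
    by (auto simp: B_def right_triangle_def mem_box_cart forall_2)
  then have "measure lebesgue B \<le> measure lebesgue (right_triangle 1)"
    by (rule measure_mono_fmeasurable)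
      (simp_all add: B_def fmeasurableD lmeasurable_compact compact_right_triangle)
  ultimately show ?thesis by simp
qed

lemma scaleR_image_right_triangle:
  assumes "0 \<le> s"
  shows "(*\<^sub>R) s ` right_triangle 1 = right_triangle s"
proof
  show "(*\<^sub>R) s ` right_triangle 1 \<subseteq> right_triangle s"
    using assms by (auto simp: right_triangle_def intro: mult_left_mono mult_left_le)
  show "right_triangle s \<subseteq> (*\<^sub>R) s ` right_triangle 1"
  proof
    fix y assume y: "y \<in> right_triangle s"
    show "y \<in> (*\<^sub>R) s ` right_triangle 1"
    proof (cases "s = 0")
      case True
      then have "0 \<in> right_triangle 1" "y = s *\<^sub>R 0"
        using y by (auto simp: right_triangle_def vec_eq_iff forall_2)
      then show ?thesis by (rule rev_image_eqI)
    next
      case False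
      with assms have "0 < s" by simp
      with y have "(1 / s) *\<^sub>R y \<in> right_triangle 1" "y = s *\<^sub>R ((1 / s) *\<^sub>R y)"
        by (auto simp: right_triangle_def divide_simps)
      then show ?thesis by (rule rev_image_eqI)
    qed
  qed
qed

lemma measure_right_triangle_cut:
  assumes "0 \<le> s" "s \<le> 1"
  shows "measure lebesgue (right_triangle 1 \<inter> {x. s \<le> x$1})
           = (1 - s\<^sup>2) * measure lebesgue (right_triangle 1)"
proof -
  define K where "K = right_triangle 1 \<inter> {x. s \<le> x$1}"
  have meas: "K \<in> lmeasurable" "right_triangle s \<in> lmeasurable"
    unfolding K_def by (intro lmeasurable_compact compact_Int_closed compact_right_triangle
        closed_halfspace_component_ge_cart)+
  have "K \<inter> right_triangle s \<subseteq> {x. axis 1 1 \<bullet> x = s}"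
    by (auto simp: K_def right_triangle_def inner_axis')
  moreover have "negligible {x::real^2. axis 1 1 \<bullet> x = s}"
    by (rule negligible_hyperplane) simp
  ultimately have "negligible (K \<inter> right_triangle s)"
    by (rule negligible_subset[rotated])
  moreover have "K \<union> right_triangle s = right_triangle 1"
    using assms by (auto simp: K_def right_triangle_def)
  ultimately have "measure lebesgue (right_triangle 1)
                     = measure lebesgue K + measure lebesgue (right_triangle s)"
    using measure_Un3[OF meas] by (simp add: negligible_imp_measure0)
  moreover have "measure lebesgue (right_triangle s) = s\<^sup>2 * measure lebesgue (right_triangle 1)"
    using measure_lebesgue_affine[of s 0 "right_triangle 1"] assms(1)
    by (simp add: scaleR_image_right_triangle)
  ultimately show ?thesis by (simp add: K_def algebra_simps)
qed

lemma first_coordinate_image_right_triangle_cut: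
  assumes "0 \<le> s" "s \<le> 1"
  shows "(\<lambda>x. x$1) ` (right_triangle 1 \<inter> {x. s \<le> x$1}) = {s..1}"
proof
  show "(\<lambda>x. x$1) ` (right_triangle 1 \<inter> {x. s \<le> x$1}) \<subseteq> {s..1}"
    by (auto simp: right_triangle_def)
  show "{s..1} \<subseteq> (\<lambda>x. x$1) ` (right_triangle 1 \<inter> {x. s \<le> x$1})"
  proof
    fix t assume "t \<in> {s..1}"
    then have "vector [t, 0] \<in> right_triangle 1 \<inter> {x. s \<le> x$1}"
      using assms by (simp add: right_triangle_def)
    then show "t \<in> (\<lambda>x. x$1) ` (right_triangle 1 \<inter> {x. s \<le> x$1})"
      by (metis image_eqI vector_2(1))
  qed
qed

lemma projection_ratio_bound:
  fixes K L :: "(real^2) set"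
  assumes "convex K" "compact K" "convex L" "compact L" "K \<subseteq> L"
    and "measure lebesgue L > 0" and u: "norm u = 1"
  shows "line_vol u (proj_perp u ` K) / line_vol u (proj_perp u ` L)
           \<ge> 1 - sqrt (1 - measure lebesgue K / measure lebesgue L)"
proof -
  have "perp_dir u \<noteq> 0" using norm_perp_dir[OF u] by auto
  then have "(1 - line_vol u (proj_perp u ` K) / line_vol u (proj_perp u ` L))\<^sup>2
               \<le> 1 - measure lebesgue K / measure lebesgue L"
    using width_ratio_power_bound[OF assms(1-6)] by (simp add: line_vol_proj_perp[OF u])
  then have "1 - line_vol u (proj_perp u ` K) / line_vol u (proj_perp u ` L)
               \<le> sqrt (1 - measure lebesgue K / measure lebesgue L)"
    by (rule real_le_rsqrt)
  then show ?thesis by simp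
qed

lemma projection_ratio_bound_sharp:
  fixes r :: real
  assumes "0 \<le> r" "r \<le> 1"
  shows "\<exists>(K::(real^2) set) L u.
           convex K \<and> compact K \<and> convex L \<and> compact L \<and> K \<subseteq> L \<and>
           measure lebesgue L > 0 \<and> norm u = 1 \<and>
           measure lebesgue K / measure lebesgue L = r \<and>
           line_vol u (proj_perp u ` K) / line_vol u (proj_perp u ` L)
             = 1 - sqrt (1 - measure lebesgue K / measure lebesgue L)"
proof -
  define s where "s = sqrt (1 - r)"
  have s: "0 \<le> s" "s \<le> 1" "s\<^sup>2 = 1 - r" using assms by (auto simp: s_def)
  define K where "K = right_triangle 1 \<inter> {x. s \<le> x$1}"
  define u :: "real^2" where "u = vector [0, -1]"
  have u: "norm u = 1" by (simp add: u_def norm_eq_1 inner_vec_def sum_2)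
  have "x \<bullet> perp_dir u = x$1" for x
    by (simp add: u_def perp_dir_def inner_vec_def sum_2)
  then have width_u: "line_vol u (proj_perp u ` S) = measure lebesgue ((\<lambda>x. x$1) ` S)" for S
    by (simp add: line_vol_proj_perp[OF u] width_def)
  have "right_triangle 1 = right_triangle 1 \<inter> {x. 0 \<le> x$1}"
    by (auto simp: right_triangle_def)
  then have "line_vol u (proj_perp u ` right_triangle 1) = 1"
    using first_coordinate_image_right_triangle_cut[of 0] width_u by simp
  moreover have "line_vol u (proj_perp u ` K) = 1 - s"
    using first_coordinate_image_right_triangle_cut[OF s(1,2)] width_u s(2) by (simp add: K_def)
  moreover have "measure lebesgue K / measure lebesgue (right_triangle 1) = r"
    using measure_right_triangle_cut[OF s(1,2)] measure_right_triangle_pos s(3) by (simp add: K_def)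
  moreover have "convex {x::real^2. s \<le> x$1}"
    using convex_halfspace_ge[where a = "axis 1 1 :: real^2" and b = s] by (simp add: inner_axis')
  then have "convex K"
    unfolding K_def by (intro convex_Int convex_right_triangle)
  moreover have "compact K"
    unfolding K_def by (intro compact_Int_closed compact_right_triangle closed_halfspace_component_ge_cart)
  ultimately show ?thesis
    using u convex_right_triangle compact_right_triangle measure_right_triangle_pos
    by (intro exI[of _ K] exI[of _ "right_triangle 1"] exI[of _ u]) (auto simp: K_def s_def)
qed

theorem proposition10:
  shows "(\<forall>(K::(real^2) set) L u.
            convex K \<and> compact K \<and> convex L \<and> compact L \<and> K \<subseteq> L \<and>
            measure lebesgue L > 0 \<and> norm u = 1 \<longrightarrow>
            line_vol u (proj_perp u ` K) / line_vol u (proj_perp u ` L)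
              \<ge> 1 - sqrt (1 - measure lebesgue K / measure lebesgue L))
       \<and> (\<forall>r::real. 0 \<le> r \<and> r \<le> 1 \<longrightarrow>
            (\<exists>(K::(real^2) set) L u.
               convex K \<and> compact K \<and> convex L \<and> compact L \<and> K \<subseteq> L \<and>
               measure lebesgue L > 0 \<and> norm u = 1 \<and>
               measure lebesgue K / measure lebesgue L = r \<and>
               line_vol u (proj_perp u ` K) / line_vol u (proj_perp u ` L)
                 = 1 - sqrt (1 - measure lebesgue K / measure lebesgue L)))"
  using projection_ratio_bound projection_ratio_bound_sharp by blast

end
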